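(* Let $0<\alpha<1$, $0<\beta\leq 1$, $L=[-1,-\beta]\cup\{\alpha\}$, let $P\subset\mathbb{R}^d$ be an $L$-spherical code, and let $G$ be the graph on vertex set $P$ in which distinct $x,y\in P$ are adjacent iff $\langle x,y\rangle\in[-1,-\beta]$. Let $\varepsilon>0$. Suppose $p_1,\dots,p_n$ is an independent set in $G$, and suppose $p^{(1)},\dots,p^{(m)}\in P$ are distinct points of the form $p^{(i)}=v^{(i)}+u^{(i)}$ with $v^{(i)}\in\operatorname{span}\{p_1,\dots,p_n\}$ and $u^{(i)}$ orthogonal to $\operatorname{span}\{p_1,\dots,p_n\}$, such that $\langle v^{(i)},v^{(j)}\rangle>\alpha+\varepsilon$ for all $i,j$. Then $m\leq 1/\varepsilon+1$.
   Context: For a set $L\subseteq[-1,1]$, an $L$-spherical code in $\mathbb{R}^d$ is a set $P$ of unit vectors such that $\langle x,y\rangle\in L$ for all distinct $x,y\in P$. *)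

theory Defs
  imports "HOL-Analysis.Analysis"
begin

definition spherical_code :: "real set \<Rightarrow> 'a::real_inner set \<Rightarrow> bool" where
  "spherical_code L P \<longleftrightarrow>
     (\<forall>x\<in>P. norm x = 1) \<and> (\<forall>x\<in>P. \<forall>y\<in>P. x \<noteq> y \<longrightarrow> inner x y \<in> L)"

definition code_adj :: "real \<Rightarrow> 'a::real_inner \<Rightarrow> 'a \<Rightarrow> bool" where
  "code_adj \<beta> x y \<longleftrightarrow> x \<noteq> y \<and> inner x y \<in> {-1..-\<beta>}"

definition code_independent :: "real \<Rightarrow> 'a::real_inner set \<Rightarrow> 'a set \<Rightarrow> bool" where
  "code_independent \<beta> P S \<longleftrightarrow> S \<subseteq> P \<and> (\<forall>x\<in>S. \<forall>y\<in>S. \<not> code_adj \<beta> x y)"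

end

theory Submission
  imports Defs
begin

text \<open>Orthogonality gives
  \<open>\<langle>p\<^sub>i, p\<^sub>j\<rangle> = \<langle>v\<^sub>i, v\<^sub>j\<rangle> + \<langle>u\<^sub>i, u\<^sub>j\<rangle>\<close>, so \<open>\<parallel>u\<^sub>i\<parallel>\<^sup>2 \<le> 1\<close>, and for \<open>i \<noteq> j\<close>
  the bound \<open>\<langle>p\<^sub>i, p\<^sub>j\<rangle> \<le> \<alpha>\<close> forces \<open>\<langle>u\<^sub>i, u\<^sub>j\<rangle> < -\<epsilon>\<close>. Expanding
  \<open>0 \<le> \<parallel>\<Sum>\<^sub>i u\<^sub>i\<parallel>\<^sup>2\<close> then gives \<open>0 \<le> m (1 - (m - 1) \<epsilon>)\<close>.\<close>

lemma card_le_if_pairwise_inner_le_neg: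
  fixes u :: "'i \<Rightarrow> 'a::real_inner"
  assumes "finite I" "0 < \<epsilon>"
    and diag: "\<And>i. i \<in> I \<Longrightarrow> inner (u i) (u i) \<le> 1"
    and off: "\<And>i j. i \<in> I \<Longrightarrow> j \<in> I \<Longrightarrow> i \<noteq> j \<Longrightarrow> inner (u i) (u j) \<le> - \<epsilon>"
  shows "real (card I) \<le> 1 / \<epsilon> + 1"
proof (cases "I = {}")
  case True
  then show ?thesis using \<open>0 < \<epsilon>\<close> by simp
next
  case False
  define c where "c = real (card I)"
  have c_pos: "0 < c"
    using False \<open>finite I\<close> by (simp add: c_def card_gt_0_iff)
  have row: "(\<Sum>j\<in>I. inner (u i) (u j)) \<le> 1 - (c - 1) * \<epsilon>" if "i \<in> I" for i
  proof -
    have "(\<Sum>j\<in>I. inner (u i) (u j)) = inner (u i) (u i) + (\<Sum>j\<in>I - {i}. inner (u i) (u j))"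
      using that \<open>finite I\<close> by (simp add: sum.remove)
    moreover have "(\<Sum>j\<in>I - {i}. inner (u i) (u j)) \<le> real (card (I - {i})) * - \<epsilon>"
      using off that by (intro sum_bounded_above) auto
    moreover have "real (card (I - {i})) = c - 1"
      using card.remove[OF \<open>finite I\<close> that] by (simp add: c_def)
    ultimately show ?thesis using diag[OF that] by simp
  qed
  have "0 \<le> inner (\<Sum>i\<in>I. u i) (\<Sum>i\<in>I. u i)" by simp
  also have "\<dots> = (\<Sum>i\<in>I. \<Sum>j\<in>I. inner (u i) (u j))"
    by (simp add: inner_sum_left inner_sum_right) (rule sum.swap)
  also have "\<dots> \<le> (\<Sum>i\<in>I. 1 - (c - 1) * \<epsilon>)"
    using row by (intro sum_mono) auto
  also have "\<dots> = c * (1 - (c - 1) * \<epsilon>)"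
    by (simp add: c_def)
  finally have "(c - 1) * \<epsilon> \<le> 1"
    using c_pos by (simp add: zero_le_mult_iff)
  then show ?thesis
    using \<open>0 < \<epsilon>\<close> by (simp add: c_def field_simps)
qed

lemma inner_add_orthogonal:
  fixes v u v' u' :: "'a::real_inner"
  assumes "inner u v' = 0" "inner u' v = 0"
  shows "inner (v + u) (v' + u') = inner v v' + inner u u'"
  using assms by (simp add: inner_add_left inner_add_right inner_commute)

lemma spherical_code_inner_le:
  assumes "spherical_code L P" "L \<subseteq> {..a}" "x \<in> P" "y \<in> P" "x \<noteq> y"
  shows "inner x y \<le> a"
  using assms unfolding spherical_code_def by blast

theorem lemma5:
  fixes \<alpha> \<beta> \<epsilon> :: real
    and P :: "'a::euclidean_space set"
    and p :: "nat \<Rightarrow> 'a" and n :: nat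
    and q v u :: "nat \<Rightarrow> 'a" and m :: nat
  assumes "0 < \<alpha>" "\<alpha> < 1" "0 < \<beta>" "\<beta> \<le> 1"
    and "spherical_code ({-1..-\<beta>} \<union> {\<alpha>}) P"
    and "0 < \<epsilon>"
    and "inj_on p {..<n}"
    and "code_independent \<beta> P (p ` {..<n})"
    and "inj_on q {..<m}"
    and "\<forall>i<m. q i \<in> P"
    and "\<forall>i<m. q i = v i + u i"
    and "\<forall>i<m. v i \<in> span (p ` {..<n})"
    and "\<forall>i<m. \<forall>w\<in>span (p ` {..<n}). inner (u i) w = 0"
    and "\<forall>i<m. \<forall>j<m. inner (v i) (v j) > \<alpha> + \<epsilon>"
  shows "real m \<le> 1 / \<epsilon> + 1"
proof -
  have gram: "inner (q i) (q j) = inner (v i) (v j) + inner (u i) (u j)" if "i < m" "j < m" for i j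
    using assms(11-13) that by (simp add: inner_add_orthogonal)
  have "inner (u i) (u i) \<le> 1" if "i < m" for i
  proof -
    have "inner (q i) (q i) = 1"
      using assms(5,10) that by (simp add: spherical_code_def dot_square_norm)
    moreover have "0 \<le> inner (v i) (v i)" by simp
    ultimately show ?thesis using gram[OF that that] by linarith
  qed
  moreover have "inner (u i) (u j) \<le> - \<epsilon>" if "i < m" "j < m" "i \<noteq> j" for i j
  proof -
    have "inner (q i) (q j) \<le> \<alpha>"
      using assms(1,3,5,9,10) that
      by (intro spherical_code_inner_le[where L = "{-1..-\<beta>} \<union> {\<alpha>}" and P = P])
         (auto simp: inj_on_def)
    then show ?thesis using gram[OF that(1,2)] assms(14) that by force
  qed
  ultimately show ?thesis
    using card_le_if_pairwise_inner_le_neg[of "{..<m}" \<epsilon> u] assms(6) by simp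
qed

end
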